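(* Let $n\ge 2$ and let $\mathcal{F}$ be a maximal coclique of $\Gamma_{2n}$. Let $A$ be an $(n-1)$-space of $\mathrm{PG}(2n,q)$ that occurs in a flag of $\mathcal{F}$. Then there exists $k\in\{1,\ldots,n+1\}$ such that the number of flags in $\mathcal{F}$ that contain $A$ is $\begin{bmatrix}k\\ 1\end{bmatrix}_q$. Furthermore, this number is $\begin{bmatrix}n+1\\ 1\end{bmatrix}_q$ if and only if every flag $(A',B')\in \mathcal{F}$ satisfies $B'\cap A\neq \emptyset$.
   Context: $\mathrm{PG}(2n,q)$ is the projective space of projective dimension $2n$ over the field of order $q$; an $i$-space is a subspace of projective dimension $i$. An $(n-1,n)$-flag is a pair $(A,B)$ with $A$ an $(n-1)$-space, $B$ an $n$-space and $A\subseteq B$; it "contains" $A$ if its $(n-1)$-space is $A$. Two such flags $(A_1,B_1),(A_2,B_2)$ are opposite if $A_1\cap B_2=A_2\cap B_1=\emptyset$. $\Gamma_{2n}$ is the graph whose vertices are the $(n-1,n)$-flags, adjacent when opposite; a maximal coclique is an inclusion-maximal set of pairwise non-opposite flags. $\begin{bmatrix}k\\ 1\end{bmatrix}_q=\frac{q^k-1}{q-1}$. *)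

theory Defs
  imports "HOL-Analysis.Analysis"
begin

text \<open>PG(2n,q) is modelled by the vector space 'a^'n over a finite field 'a with
  CARD('n) = 2n+1; a projective i-space is a linear subspace of vector dimension i+1.
  Projective subspaces are disjoint iff the linear subspaces meet only in 0.\<close>

definition proj_space :: "nat \<Rightarrow> ('a::field ^ 'n) set \<Rightarrow> bool" where
  "proj_space i S \<longleftrightarrow> vec.subspace S \<and> vec.dim S = i + 1"

definition disjoint_sp :: "('a::field ^ 'n) set \<Rightarrow> ('a ^ 'n) set \<Rightarrow> bool" where
  "disjoint_sp S T \<longleftrightarrow> S \<inter> T = {0}"

definition is_flag :: "nat \<Rightarrow> ('a::field ^ 'n) set \<times> ('a ^ 'n) set \<Rightarrow> bool" where
  "is_flag n F \<longleftrightarrow> proj_space (n - 1) (fst F) \<and> proj_space n (snd F) \<and> fst F \<subseteq> snd F"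

definition opposite :: "('a::field ^ 'n) set \<times> ('a ^ 'n) set \<Rightarrow> ('a ^ 'n) set \<times> ('a ^ 'n) set \<Rightarrow> bool" where
  "opposite F1 F2 \<longleftrightarrow> disjoint_sp (fst F1) (snd F2) \<and> disjoint_sp (fst F2) (snd F1)"

definition coclique :: "nat \<Rightarrow> (('a::field ^ 'n) set \<times> ('a ^ 'n) set) set \<Rightarrow> bool" where
  "coclique n \<F> \<longleftrightarrow> (\<forall>F\<in>\<F>. is_flag n F) \<and> (\<forall>F1\<in>\<F>. \<forall>F2\<in>\<F>. \<not> opposite F1 F2)"

definition max_coclique :: "nat \<Rightarrow> (('a::field ^ 'n) set \<times> ('a ^ 'n) set) set \<Rightarrow> bool" where
  "max_coclique n \<F> \<longleftrightarrow> coclique n \<F> \<and>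
     (\<forall>G. is_flag n G \<and> G \<notin> \<F> \<longrightarrow> \<not> coclique n (insert G \<F>))"

definition qbin1 :: "nat \<Rightarrow> nat \<Rightarrow> nat" where
  "qbin1 q k = (q ^ k - 1) div (q - 1)"

end

theory Submission
  imports Defs
begin

text \<open>Let \<open>D\<close> be the set of \<open>(n-1)\<close>-spaces \<open>A'\<close> of flags \<open>(A',B') \<in> \<F>\<close> with \<open>B'\<close>
  disjoint from \<open>A\<close>, and let \<open>W\<close> be the intersection of the spaces \<open>A + A'\<close>, \<open>A' \<in> D\<close>.
  A flag \<open>(A,B)\<close> is not opposite to such an \<open>(A',B')\<close> only if \<open>B\<close> meets \<open>A'\<close>, which forces
  \<open>B \<subseteq> A + A'\<close>; conversely, by maximality, every \<open>n\<close>-space \<open>B\<close> with \<open>A \<subseteq> B \<subseteq> W\<close> gives a flag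
  \<open>(A,B) \<in> \<F>\<close>. So the flags of \<open>\<F>\<close> through \<open>A\<close> correspond to the points of the projective
  space of \<open>W/A\<close>, and there are \<open>[k choose 1]\<^sub>q\<close> of them, \<open>k = dim W - dim A \<in> {1..n+1}\<close>.
  The maximum \<open>k = n + 1\<close> means that \<open>W\<close> is the whole space, which happens iff \<open>D\<close> is empty,
  since \<open>dim (A + A') \<le> 2n\<close>.\<close>

lemma qbin1_eq_sum:
  assumes "2 \<le> q"
  shows "qbin1 q k = (\<Sum>i<k. q ^ i)"
proof -
  have "int (q ^ k - 1) = int (q - 1) * int (\<Sum>i<k. q ^ i)"
    using assms power_diff_1_eq[of "int q" k] by simp
  then have "q ^ k - 1 = (q - 1) * (\<Sum>i<k. q ^ i)"
    by (metis of_nat_eq_iff of_nat_mult)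
  then show ?thesis
    using assms unfolding qbin1_def by simp
qed

lemma qbin1_eq_iff:
  assumes "2 \<le> q"
  shows "qbin1 q j = qbin1 q k \<longleftrightarrow> j = k"
proof -
  have "strict_mono (\<lambda>k. \<Sum>i<k. q ^ i)"
    using assms by (intro strict_monoI_Suc) simp
  then have "(\<Sum>i<j. q ^ i) = (\<Sum>i<k. q ^ i) \<longleftrightarrow> j = k"
    by (rule strict_mono_eq)
  then show ?thesis
    using assms by (simp add: qbin1_eq_sum)
qed

lemma card_UNIV_field_ge_2: "2 \<le> CARD('a::{field,finite})"
proof -
  have "card {0::'a, 1} \<le> CARD('a)"
    by (rule card_mono) auto
  then show ?thesis
    by simp
qed

lemma card_subspace:
  fixes S :: "('a::{field,finite} ^ 'n) set"
  assumes "vec.subspace S"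
  shows "card S = CARD('a) ^ vec.dim S"
proof -
  obtain B where B: "B \<subseteq> S" "vec.independent B" "S \<subseteq> vec.span B" "card B = vec.dim S"
    using vec.basis_exists by blast
  have S_eq: "S = vec.span B"
    using B assms by (metis vec.span_minimal subset_antisym)
  have independent: "\<forall>v\<in>B. c v = 0" if "(\<Sum>v\<in>B. c v *s v) = 0" for c
    using that B(2) vec.independent_explicit[of B] by simp
  define comb where "comb u = (\<Sum>v\<in>B. u v *s v)" for u :: "'a ^ 'n \<Rightarrow> 'a"
  have "bij_betw comb (B \<rightarrow>\<^sub>E UNIV) S"
  proof (rule bij_betw_imageI)
    show "inj_on comb (B \<rightarrow>\<^sub>E UNIV)"
    proof (rule inj_onI)
      fix u w assume u: "u \<in> B \<rightarrow>\<^sub>E UNIV" and w: "w \<in> B \<rightarrow>\<^sub>E UNIV" and "comb u = comb w"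
      then have "(\<Sum>v\<in>B. (u v - w v) *s v) = 0"
        unfolding comb_def by (simp add: vector_sub_rdistrib sum_subtractf)
      then have "\<forall>v\<in>B. u v - w v = 0"
        by (rule independent)
      then show "u = w"
        using u w by (auto simp: PiE_def extensional_def fun_eq_iff)
    qed
    have "comb ` (B \<rightarrow>\<^sub>E UNIV) = {\<Sum>v\<in>B. u v *s v | u. True}"
      unfolding comb_def by (force intro: image_eqI[where x = "restrict _ B"] sum.cong)
    then show "comb ` (B \<rightarrow>\<^sub>E UNIV) = S"
      unfolding S_eq vec.span_finite[OF finite] by auto
  qed
  then have "card S = card (B \<rightarrow>\<^sub>E (UNIV :: 'a set))"
    by (simp add: bij_betw_same_card)
  then show ?thesis
    using B(4) by (simp add: card_PiE)
qed

lemma span_insert_eq_of_dim_Suc: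
  fixes A B :: "('a::field ^ 'n) set"
  assumes "vec.subspace A" "vec.subspace B" "A \<subseteq> B" "vec.dim B = vec.dim A + 1"
    and "v \<in> B" "v \<notin> A"
  shows "vec.span (insert v A) = B"
proof -
  have "vec.dim (insert v A) = vec.dim B"
    using assms by (simp add: vec.dim_insert vec.span_eq_iff[THEN iffD2])
  moreover have "vec.span (insert v A) \<subseteq> B"
    using assms by (intro vec.span_minimal) auto
  ultimately show ?thesis
    using vec.subspace_dim_equal[OF vec.subspace_span assms(2)] by simp
qed

definition covers_within :: "('a::field ^ 'n) set \<Rightarrow> ('a ^ 'n) set \<Rightarrow> ('a ^ 'n) set set" where
  "covers_within A W = {B. vec.subspace B \<and> vec.dim B = vec.dim A + 1 \<and> A \<subseteq> B \<and> B \<subseteq> W}"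

lemma card_covers_within:
  fixes A W :: "('a::{field,finite} ^ 'n) set"
  assumes "vec.subspace A" "vec.subspace W" "A \<subseteq> W"
  shows "card (covers_within A W) = qbin1 CARD('a) (vec.dim W - vec.dim A)"
proof -
  let ?q = "CARD('a)" and ?d = "vec.dim A" and ?k = "vec.dim W - vec.dim A"
  have cover_span: "vec.span (insert v A) \<in> covers_within A W" if "v \<in> W - A" for v
    using that assms vec.span_superset[of "insert v A"] vec.span_minimal[of "insert v A" W]
    by (auto simp: covers_within_def vec.dim_insert vec.span_eq_iff[THEN iffD2])
  have cover_eq: "B = vec.span (insert v A)" if "B \<in> covers_within A W" "v \<in> B - A" for B v
    using that assms span_insert_eq_of_dim_Suc[of A B v] by (auto simp: covers_within_def)
  have "W - A = (\<Union>B\<in>covers_within A W. B - A)"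
  proof
    show "W - A \<subseteq> (\<Union>B\<in>covers_within A W. B - A)"
      using cover_span vec.span_base[OF insertI1] by blast
  qed (auto simp: covers_within_def)
  moreover have "(B1 - A) \<inter> (B2 - A) = {}"
    if "B1 \<in> covers_within A W" "B2 \<in> covers_within A W" "B1 \<noteq> B2" for B1 B2
    using that cover_eq by blast
  ultimately have "card (W - A) = (\<Sum>B\<in>covers_within A W. card (B - A))"
    by (simp only:) (rule card_UN_disjoint; simp)
  also have "\<dots> = card (covers_within A W) * (?q ^ (?d + 1) - ?q ^ ?d)"
    using assms(1) by (simp add: covers_within_def card_Diff_subset card_subspace)
  finally have "card (covers_within A W) * (?q ^ ?d * (?q - 1)) = ?q ^ ?d * (?q ^ ?k - 1)"
    using assms vec.dim_subset[OF assms(3)]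
    by (simp add: card_Diff_subset card_subspace algebra_simps flip: power_add)
  then have "card (covers_within A W) * (?q - 1) = ?q ^ ?k - 1"
    by simp
  then have "qbin1 ?q ?k = card (covers_within A W) * (?q - 1) div (?q - 1)"
    unfolding qbin1_def by simp
  then show ?thesis
    using card_UNIV_field_ge_2[where 'a = 'a] by simp
qed

lemma subspace_dim_eq_CARD_iff:
  fixes S :: "('a::field ^ 'n) set"
  assumes "vec.subspace S"
  shows "vec.dim S = CARD('n) \<longleftrightarrow> S = UNIV"
  using vec.subspace_dim_equal[OF assms vec.subspace_UNIV subset_UNIV]
    vec_dim_card[where 'a = 'a and 'n = 'n] by auto

lemma disjoint_sp_commute: "disjoint_sp S T \<longleftrightarrow> disjoint_sp T S"
  by (auto simp: disjoint_sp_def)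

lemma opposite_commute: "opposite F G \<longleftrightarrow> opposite G F"
  by (auto simp: opposite_def)

lemma is_flag_iff:
  assumes "0 < n"
  shows "is_flag n (A, B) \<longleftrightarrow>
    vec.subspace A \<and> vec.dim A = n \<and> vec.subspace B \<and> vec.dim B = n + 1 \<and> A \<subseteq> B"
  using assms by (auto simp: is_flag_def proj_space_def)

lemma not_opposite_self:
  assumes "0 < n" "is_flag n F"
  shows "\<not> opposite F F"
proof
  assume "opposite F F"
  with assms have "fst F = {0}"
    by (auto simp: is_flag_def opposite_def disjoint_sp_def)
  with assms show False
    by (simp add: is_flag_def proj_space_def)
qed

lemma coclique_insert_iff:
  "coclique n (insert G \<F>) \<longleftrightarrow>
    coclique n \<F> \<and> is_flag n G \<and> \<not> opposite G G \<and> (\<forall>F\<in>\<F>. \<not> opposite G F)"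
proof -
  have "(\<forall>F\<in>\<F>. \<not> opposite G F \<and> \<not> opposite F G) \<longleftrightarrow> (\<forall>F\<in>\<F>. \<not> opposite G F)"
    using opposite_commute[of G] by blast
  then show ?thesis
    unfolding coclique_def by auto
qed

lemma coclique_memD:
  assumes "coclique n \<F>" "(A, B) \<in> \<F>"
  shows "is_flag n (A, B)" "vec.subspace A"
proof -
  show "is_flag n (A, B)"
    using assms by (simp add: coclique_def)
  then show "vec.subspace A"
    by (simp add: is_flag_def proj_space_def)
qed

definition flag_bound :: "(('a::field ^ 'n) set \<times> ('a ^ 'n) set) set \<Rightarrow> ('a ^ 'n) set \<Rightarrow> ('a ^ 'n) set" where
  "flag_bound \<F> A =
    (\<Inter>(A', B')\<in>\<F>. if disjoint_sp A B' then {x + y |x y. x \<in> A \<and> y \<in> A'} else UNIV)"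

lemma subset_flag_bound_iff:
  "W \<subseteq> flag_bound \<F> A \<longleftrightarrow>
    (\<forall>(A', B')\<in>\<F>. disjoint_sp A B' \<longrightarrow> W \<subseteq> {x + y |x y. x \<in> A \<and> y \<in> A'})"
  unfolding flag_bound_def le_INF_iff by (simp add: case_prod_beta)

lemma subspace_flag_bound:
  assumes "coclique n \<F>" "vec.subspace A"
  shows "vec.subspace (flag_bound \<F> A)"
  unfolding flag_bound_def using assms coclique_memD(2)[OF assms(1)]
  by (auto intro!: vec.subspace_Inter vec.subspace_sums vec.subspace_UNIV)

lemma subset_flag_bound:
  assumes "coclique n \<F>"
  shows "A \<subseteq> flag_bound \<F> A"
proof -
  have "A \<subseteq> {x + y |x y. x \<in> A \<and> y \<in> A'}" if "(A', B') \<in> \<F>" for A' B'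
    using vec.subspace_0[OF coclique_memD(2)[OF assms that]] by force
  then show ?thesis
    unfolding subset_flag_bound_iff by blast
qed

lemma coclique_flag_subset_flag_bound:
  assumes "coclique n \<F>" "0 < n" "(A, B) \<in> \<F>"
  shows "B \<subseteq> flag_bound \<F> A"
proof -
  have flag_AB: "vec.subspace A" "vec.subspace B" "A \<subseteq> B" "vec.dim B = vec.dim A + 1"
    using coclique_memD(1)[OF assms(1,3)] by (simp_all add: is_flag_iff[OF assms(2)])
  have "B \<subseteq> {x + y |x y. x \<in> A \<and> y \<in> A'}"
    if A'B': "(A', B') \<in> \<F>" "disjoint_sp A B'" for A' B'
  proof -
    have flag_A'B': "vec.subspace A'" "A' \<subseteq> B'"
      using coclique_memD(1)[OF assms(1) A'B'(1)] by (simp_all add: is_flag_iff[OF assms(2)])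
    have "\<not> opposite (A, B) (A', B')"
      using assms(1,3) A'B'(1) by (simp add: coclique_def)
    then have "\<not> disjoint_sp A' B"
      using A'B'(2) by (simp add: opposite_def)
    then obtain w where w: "w \<in> A'" "w \<in> B" "w \<noteq> 0"
      using flag_A'B'(1) flag_AB(2) by (auto simp: disjoint_sp_def vec.subspace_0)
    have "w \<notin> A"
      using w flag_A'B'(2) A'B'(2) by (auto simp: disjoint_sp_def)
    then have "B = vec.span (insert w A)"
      using span_insert_eq_of_dim_Suc[OF flag_AB w(2)] by simp
    also have "\<dots> \<subseteq> {x + y |x y. x \<in> A \<and> y \<in> A'}"
    proof (rule vec.span_minimal)
      have "w \<in> {x + y |x y. x \<in> A \<and> y \<in> A'}" and "A \<subseteq> {x + y |x y. x \<in> A \<and> y \<in> A'}"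
        using w(1) vec.subspace_0[OF flag_AB(1)] vec.subspace_0[OF flag_A'B'(1)] by force+
      then show "insert w A \<subseteq> {x + y |x y. x \<in> A \<and> y \<in> A'}"
        by simp
    qed (use flag_AB(1) flag_A'B'(1) in \<open>rule vec.subspace_sums\<close>)
    finally show ?thesis .
  qed
  then show ?thesis
    unfolding subset_flag_bound_iff by blast
qed

lemma max_coclique_flag_memI:
  assumes "max_coclique n \<F>" "0 < n" "is_flag n (A, B)" "B \<subseteq> flag_bound \<F> A"
  shows "(A, B) \<in> \<F>"
proof (rule ccontr)
  assume "(A, B) \<notin> \<F>"
  with assms(1,3) have "\<not> coclique n (insert (A, B) \<F>)"
    by (simp add: max_coclique_def)
  moreover have "coclique n \<F>"
    using assms(1) by (simp add: max_coclique_def)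
  ultimately obtain F where "F \<in> \<F>" "opposite (A, B) F"
    using assms(3) not_opposite_self[OF assms(2,3)] unfolding coclique_insert_iff by blast
  then obtain A' B' where A'B': "(A', B') \<in> \<F>" "disjoint_sp A B'" "disjoint_sp A' B"
    by (cases F) (auto simp: opposite_def)
  have flag_AB: "vec.subspace B" "A \<subseteq> B" "vec.dim B = vec.dim A + 1"
    using assms(3) by (simp_all add: is_flag_iff[OF assms(2)])
  then have "B \<noteq> A"
    by auto
  then obtain v where v: "v \<in> B" "v \<notin> A"
    using flag_AB(2) by blast
  have "B \<subseteq> {x + y |x y. x \<in> A \<and> y \<in> A'}"
    using assms(4) A'B'(1,2) unfolding subset_flag_bound_iff by blast
  then obtain x y where xy: "v = x + y" "x \<in> A" "y \<in> A'"
    using v(1) by blast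
  then have "y = v - x"
    by simp
  then have "y \<in> B"
    using vec.subspace_diff[OF flag_AB(1) v(1)] flag_AB(2) xy(2) by blast
  moreover have "y \<noteq> 0"
    using v(2) xy by auto
  ultimately show False
    using xy(3) A'B'(3) by (auto simp: disjoint_sp_def)
qed

lemma flags_through_eq:
  assumes "max_coclique n \<F>" "0 < n" "vec.subspace A" "vec.dim A = n"
  shows "{F\<in>\<F>. fst F = A} = Pair A ` covers_within A (flag_bound \<F> A)"
proof -
  have coclique: "coclique n \<F>"
    using assms(1) by (simp add: max_coclique_def)
  have "(A, B) \<in> \<F> \<longleftrightarrow> B \<in> covers_within A (flag_bound \<F> A)" for B
  proof
    assume "(A, B) \<in> \<F>"
    then show "B \<in> covers_within A (flag_bound \<F> A)"
      using coclique_memD(1)[OF coclique] coclique_flag_subset_flag_bound[OF coclique assms(2)] assms(4)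
      by (auto simp: covers_within_def is_flag_iff[OF assms(2)])
  next
    assume "B \<in> covers_within A (flag_bound \<F> A)"
    then show "(A, B) \<in> \<F>"
      using assms(3,4) by (intro max_coclique_flag_memI[OF assms(1,2)])
        (auto simp: covers_within_def is_flag_iff[OF assms(2)])
  qed
  then show ?thesis
    by force
qed

lemma flag_bound_eq_UNIV_iff:
  assumes "coclique n \<F>" "0 < n" "CARD('n) = 2 * n + 1" "vec.subspace A" "vec.dim A = n"
  shows "flag_bound \<F> A = (UNIV :: ('a::field ^ 'n) set) \<longleftrightarrow> (\<forall>(A', B')\<in>\<F>. \<not> disjoint_sp B' A)"
proof -
  have sum_not_UNIV: "\<not> UNIV \<subseteq> {x + y |x y. x \<in> A \<and> y \<in> A'}" if "(A', B') \<in> \<F>" for A' B'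
  proof
    assume "UNIV \<subseteq> {x + y |x y. x \<in> A \<and> y \<in> A'}"
    have flag_A': "vec.subspace A'" "vec.dim A' = n"
      using coclique_memD(1)[OF assms(1) that] by (simp_all add: is_flag_iff[OF assms(2)])
    have "CARD('n) = vec.dim (UNIV :: ('a ^ 'n) set)"
      by (rule vec_dim_card[symmetric])
    also have "\<dots> \<le> vec.dim {x + y |x y. x \<in> A \<and> y \<in> A'}"
      by (rule vec.dim_subset) fact
    also have "\<dots> \<le> 2 * n"
      using vec.dim_sums_Int[OF assms(4) flag_A'(1)] assms(5) flag_A'(2) by simp
    finally show False
      using assms(3) by simp
  qed
  have "flag_bound \<F> A = UNIV \<longleftrightarrow> UNIV \<subseteq> flag_bound \<F> A"
    by blast
  also have "\<dots> \<longleftrightarrow> (\<forall>(A', B')\<in>\<F>. disjoint_sp A B' \<longrightarrow> UNIV \<subseteq> {x + y |x y. x \<in> A \<and> y \<in> A'})"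
    by (rule subset_flag_bound_iff)
  also have "\<dots> \<longleftrightarrow> (\<forall>(A', B')\<in>\<F>. \<not> disjoint_sp A B')"
    using sum_not_UNIV by auto
  also have "\<dots> \<longleftrightarrow> (\<forall>(A', B')\<in>\<F>. \<not> disjoint_sp B' A)"
    by (simp add: disjoint_sp_commute[of A])
  finally show ?thesis .
qed

theorem mainTheorem4:
  fixes n :: nat
    and \<F> :: "(('a::{field,finite} ^ 'n) set \<times> ('a ^ 'n) set) set"
    and A :: "('a ^ 'n) set"
  assumes "n \<ge> 2"
    and "CARD('n) = 2 * n + 1"
    and "max_coclique n \<F>"
    and "\<exists>B. (A, B) \<in> \<F>"
  shows "(\<exists>k\<in>{1..n+1}. card {F\<in>\<F>. fst F = A} = qbin1 CARD('a) k)
    \<and> (card {F\<in>\<F>. fst F = A} = qbin1 CARD('a) (n + 1)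
         \<longleftrightarrow> (\<forall>(A', B')\<in>\<F>. \<not> disjoint_sp B' A))"
proof -
  have n_pos: "0 < n" and coclique: "coclique n \<F>"
    using assms(1,3) by (auto simp: max_coclique_def)
  obtain B where B: "(A, B) \<in> \<F>"
    using assms(4) by blast
  have A: "vec.subspace A" "vec.dim A = n" and dim_B: "vec.dim B = n + 1"
    using coclique_memD(1)[OF coclique B] by (auto simp: is_flag_iff[OF n_pos])
  define W where "W = flag_bound \<F> A"
  have W: "vec.subspace W" "A \<subseteq> W"
    unfolding W_def using subspace_flag_bound[OF coclique A(1)] subset_flag_bound[OF coclique] .
  have card_flags: "card {F\<in>\<F>. fst F = A} = qbin1 CARD('a) (vec.dim W - n)"
    unfolding flags_through_eq[OF assms(3) n_pos A] W_def[symmetric]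
    using card_covers_within[OF A(1) W] A(2) by (simp add: card_image inj_on_def)
  have "n + 1 \<le> vec.dim W"
    using vec.dim_subset[OF coclique_flag_subset_flag_bound[OF coclique n_pos B]] dim_B W_def by simp
  moreover have "vec.dim W \<le> 2 * n + 1"
    using dim_subset_UNIV_cart_gen[of W] assms(2) by simp
  ultimately have k_range: "vec.dim W - n \<in> {1..n+1}"
    and "vec.dim W - n = n + 1 \<longleftrightarrow> W = UNIV"
    using subspace_dim_eq_CARD_iff[OF W(1)] assms(2) by auto
  then have "card {F\<in>\<F>. fst F = A} = qbin1 CARD('a) (n + 1) \<longleftrightarrow> W = UNIV"
    using card_flags qbin1_eq_iff[OF card_UNIV_field_ge_2[where 'a = 'a]] by simp
  then show ?thesis
    using k_range card_flags flag_bound_eq_UNIV_iff[OF coclique n_pos assms(2) A]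
    unfolding W_def by blast
qed

end
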